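(* Let $\alpha,\beta,\gamma,\delta\in\mathbb{R}$ with $\alpha+\delta\neq 0$ and $\alpha\gamma+\beta\delta=0$, and let $G_5$ be the connected, simply connected Lie group whose Lie algebra $\mathfrak{g}_5$ has a basis $\{e_1,e_2,e_3\}$ with $[e_1,e_2]=0$, $[e_1,e_3]=\alpha e_1+\beta e_2$, $[e_2,e_3]=\gamma e_1+\delta e_2$, equipped with the left-invariant Lorentzian metric $g$ for which $\{e_1,e_2,e_3\}$ is pseudo-orthonormal with $e_3$ timelike, and with the product structure $J$. Let $\lambda_0,c\in\mathbb{R}$. Then there exists a derivation $D$ of $\mathfrak{g}_5$ with $\widetilde{\mathrm{Ric}}^1=(s^1\lambda_0+c)\mathrm{Id}+D$ (i.e. $(G_5,g,J)$ is an algebraic Schouten soliton associated to the Kobayashi–Nomizu connection $\nabla^1$) if and only if $c=0$.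
   Context: Pseudo-orthonormal means $g(e_1,e_1)=g(e_2,e_2)=1$, $g(e_3,e_3)=-1$, $g(e_i,e_j)=0$ for $i\neq j$; left-invariant tensors are identified with their values on $\mathfrak{g}$. $\nabla$ is the Levi-Civita connection of $g$. The product structure $J$ is the left-invariant endomorphism with $Je_1=e_1$, $Je_2=e_2$, $Je_3=-e_3$. The canonical connection is $\nabla^0_XY=\nabla_XY-\frac12(\nabla_XJ)JY$, and the Kobayashi–Nomizu connection is $\nabla^1_XY=\nabla^0_XY-\frac14[(\nabla_YJ)JX-(\nabla_{JY}J)X]$. For $k=0,1$: $R^k(X,Y)Z=\nabla^k_X\nabla^k_YZ-\nabla^k_Y\nabla^k_XZ-\nabla^k_{[X,Y]}Z$; $\rho^k(X,Y)=-g(R^k(X,e_1)Y,e_1)-g(R^k(X,e_2)Y,e_2)+g(R^k(X,e_3)Y,e_3)$; $\widetilde\rho^k(X,Y)=\frac12(\rho^k(X,Y)+\rho^k(Y,X))$; $\widetilde{\mathrm{Ric}}^k$ is defined by $\widetilde\rho^k(X,Y)=g(\widetilde{\mathrm{Ric}}^k(X),Y)$; and $s^k=\widetilde\rho^k(e_1,e_1)+\widetilde\rho^k(e_2,e_2)-\widetilde\rho^k(e_3,e_3)$. A derivation of $\mathfrak{g}$ is a linear map $D$ with $D[X,Y]=[DX,Y]+[X,DY]$. $(G,g,J)$ is an algebraic Schouten soliton associated to $\nabla^k$ (with real constants $\lambda_0,c$) if $\widetilde{\mathrm{Ric}}^k=(s^k\lambda_0+c)\mathrm{Id}+D$ for some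 derivation $D$. *)

theory Defs
  imports "HOL-Analysis.Analysis"
begin

text \<open>The Lie algebra is identified with real^3, with basis e_i = axis i 1.
  Left-invariant tensors are identified with their values on the Lie algebra.\<close>

type_synonym vec3 = "real ^ 3"

definition ebas :: "3 \<Rightarrow> vec3" where
  "ebas i = axis i 1"

definition eps :: "3 \<Rightarrow> real" where
  "eps i = (if i = 3 then -1 else 1)"

definition gmet :: "vec3 \<Rightarrow> vec3 \<Rightarrow> real" where
  "gmet x y = x$1 * y$1 + x$2 * y$2 - x$3 * y$3"

text \<open>Lie bracket of g_5: [e1,e2]=0, [e1,e3]=a e1 + b e2, [e2,e3]=c e1 + d e2,
  extended bilinearly and skew-symmetrically.\<close>
definition br5 :: "real \<Rightarrow> real \<Rightarrow> real \<Rightarrow> real \<Rightarrow> vec3 \<Rightarrow> vec3 \<Rightarrow> vec3" where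
  "br5 a b c d X Y =
     (X$1 * Y$3 - X$3 * Y$1) *\<^sub>R vector [a, b, 0]
   + (X$2 * Y$3 - X$3 * Y$2) *\<^sub>R vector [c, d, 0]"

text \<open>Levi-Civita connection of the left-invariant metric (Koszul formula):
  2 g(nabla_X Y, Z) = g([X,Y],Z) - g([Y,Z],X) + g([Z,X],Y);
  the vector is recovered via v = sum_i eps_i g(v,e_i) e_i.\<close>
definition LC :: "(vec3 \<Rightarrow> vec3 \<Rightarrow> vec3) \<Rightarrow> vec3 \<Rightarrow> vec3 \<Rightarrow> vec3" where
  "LC br X Y = (\<chi> i. eps i * (1/2) *
      (gmet (br X Y) (ebas i) - gmet (br Y (ebas i)) X + gmet (br (ebas i) X) Y))"

definition Jps :: "vec3 \<Rightarrow> vec3" where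
  "Jps x = (\<chi> i. if i = 3 then - (x$i) else x$i)"

definition nablaJ :: "(vec3 \<Rightarrow> vec3 \<Rightarrow> vec3) \<Rightarrow> vec3 \<Rightarrow> vec3 \<Rightarrow> vec3" where
  "nablaJ br X Y = LC br X (Jps Y) - Jps (LC br X Y)"

definition nabla0 :: "(vec3 \<Rightarrow> vec3 \<Rightarrow> vec3) \<Rightarrow> vec3 \<Rightarrow> vec3 \<Rightarrow> vec3" where
  "nabla0 br X Y = LC br X Y - (1/2) *\<^sub>R nablaJ br X (Jps Y)"

definition nabla1 :: "(vec3 \<Rightarrow> vec3 \<Rightarrow> vec3) \<Rightarrow> vec3 \<Rightarrow> vec3 \<Rightarrow> vec3" where
  "nabla1 br X Y = nabla0 br X Y
     - (1/4) *\<^sub>R (nablaJ br Y (Jps X) - nablaJ br (Jps Y) X)"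

definition curv :: "(vec3 \<Rightarrow> vec3 \<Rightarrow> vec3) \<Rightarrow> (vec3 \<Rightarrow> vec3 \<Rightarrow> vec3)
    \<Rightarrow> vec3 \<Rightarrow> vec3 \<Rightarrow> vec3 \<Rightarrow> vec3" where
  "curv br conn X Y Z = conn X (conn Y Z) - conn Y (conn X Z) - conn (br X Y) Z"

definition ricci :: "(vec3 \<Rightarrow> vec3 \<Rightarrow> vec3) \<Rightarrow> (vec3 \<Rightarrow> vec3 \<Rightarrow> vec3)
    \<Rightarrow> vec3 \<Rightarrow> vec3 \<Rightarrow> real" where
  "ricci br conn X Y =
     - gmet (curv br conn X (ebas 1) Y) (ebas 1)
     - gmet (curv br conn X (ebas 2) Y) (ebas 2)
     + gmet (curv br conn X (ebas 3) Y) (ebas 3)"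

definition sym_ricci :: "(vec3 \<Rightarrow> vec3 \<Rightarrow> vec3) \<Rightarrow> (vec3 \<Rightarrow> vec3 \<Rightarrow> vec3)
    \<Rightarrow> vec3 \<Rightarrow> vec3 \<Rightarrow> real" where
  "sym_ricci br conn X Y = (1/2) * (ricci br conn X Y + ricci br conn Y X)"

text \<open>Ricci operator: g(Ric X, Y) = sym_ricci X Y.\<close>
definition ricci_op :: "(vec3 \<Rightarrow> vec3 \<Rightarrow> vec3) \<Rightarrow> (vec3 \<Rightarrow> vec3 \<Rightarrow> vec3)
    \<Rightarrow> vec3 \<Rightarrow> vec3" where
  "ricci_op br conn X = (\<chi> i. eps i * sym_ricci br conn X (ebas i))"

definition scal :: "(vec3 \<Rightarrow> vec3 \<Rightarrow> vec3) \<Rightarrow> (vec3 \<Rightarrow> vec3 \<Rightarrow> vec3) \<Rightarrow> real" where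
  "scal br conn = sym_ricci br conn (ebas 1) (ebas 1) + sym_ricci br conn (ebas 2) (ebas 2)
                  - sym_ricci br conn (ebas 3) (ebas 3)"

definition is_derivation :: "(vec3 \<Rightarrow> vec3 \<Rightarrow> vec3) \<Rightarrow> (vec3 \<Rightarrow> vec3) \<Rightarrow> bool" where
  "is_derivation br D \<longleftrightarrow> linear D \<and> (\<forall>X Y. D (br X Y) = br (D X) Y + br X (D Y))"

definition alg_schouten_soliton :: "(vec3 \<Rightarrow> vec3 \<Rightarrow> vec3) \<Rightarrow> (vec3 \<Rightarrow> vec3 \<Rightarrow> vec3)
    \<Rightarrow> real \<Rightarrow> real \<Rightarrow> bool" where
  "alg_schouten_soliton br conn lam0 c \<longleftrightarrow>
     (\<exists>D. is_derivation br D \<and>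
          (\<forall>X. ricci_op br conn X = (scal br conn * lam0 + c) *\<^sub>R X + D X))"

end

theory Submission
  imports Defs
begin

text \<open>The Kobayashi--Nomizu connection of \<open>\<gg>\<^sub>5\<close> is \<open>\<nabla>\<^sup>1\<^sub>X = x\<^sub>3 ad(e\<^sub>3)\<close>.
  Since the derived algebra lies in \<open>span{e\<^sub>1, e\<^sub>2}\<close>, this connection is flat, so
  \<open>Ric\<^sup>1\<close> and \<open>s\<^sup>1\<close> vanish and the soliton equation forces \<open>D = -c Id\<close>. A nonzero
  multiple of the identity is a derivation only of an abelian Lie algebra, and \<open>\<gg>\<^sub>5\<close> is
  not abelian because \<open>\<alpha> + \<delta> \<noteq> 0\<close>.\<close>

lemma ricci_op_flat:
  assumes "\<And>X Y Z. curv br conn X Y Z = 0"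
  shows "ricci_op br conn X = 0"
  unfolding ricci_op_def sym_ricci_def ricci_def assms gmet_def by (simp add: vec_eq_iff)

lemma scal_flat:
  assumes "\<And>X Y Z. curv br conn X Y Z = 0"
  shows "scal br conn = 0"
  unfolding scal_def sym_ricci_def ricci_def assms gmet_def by simp

lemma alg_schouten_soliton_flat_iff:
  assumes "\<And>X Y Z. curv br conn X Y Z = 0"
  shows "alg_schouten_soliton br conn lam0 c \<longleftrightarrow> is_derivation br (\<lambda>X. (- c) *\<^sub>R X)"
proof -
  have "(\<forall>X. 0 = c *\<^sub>R X + D X) \<longleftrightarrow> D = (\<lambda>X. (- c) *\<^sub>R X)" for D :: "vec3 \<Rightarrow> vec3"
    by (auto simp: fun_eq_iff add_eq_0_iff2)
  then show ?thesis
    unfolding alg_schouten_soliton_def ricci_op_flat[OF assms] scal_flat[OF assms] by auto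
qed

lemma scaleR_id_is_derivation_iff:
  assumes "bilinear br"
  shows "is_derivation br (\<lambda>X. k *\<^sub>R X) \<longleftrightarrow> k = 0 \<or> (\<forall>X Y. br X Y = 0)"
proof -
  have "br (k *\<^sub>R X) Y + br X (k *\<^sub>R Y) = 2 * k *\<^sub>R br X Y" for X Y
    using bilinear_lmul[OF assms] bilinear_rmul[OF assms] by (simp add: scaleR_2)
  then have "is_derivation br (\<lambda>X. k *\<^sub>R X) \<longleftrightarrow> (\<forall>X Y. k *\<^sub>R br X Y = 0)"
    by (auto simp: is_derivation_def linear_scaleR algebra_simps)
  then show ?thesis
    by auto
qed

lemma bilinear_br5: "bilinear (br5 a b c d)"
  unfolding bilinear_def br5_def
  by (auto intro!: linearI simp: algebra_simps scaleR_add_left[symmetric] simp del: scaleR_add_left)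

lemma br5_nonabelian:
  assumes "a + d \<noteq> 0"
  shows "\<not> (\<forall>X Y. br5 a b c d X Y = 0)"
proof
  assume "\<forall>X Y. br5 a b c d X Y = 0"
  then have "br5 a b c d (ebas 1) (ebas 3) = 0" "br5 a b c d (ebas 2) (ebas 3) = 0"
    by auto
  then have "a = 0" "d = 0"
    by (simp_all add: br5_def ebas_def vec_eq_iff forall_3 vector_def axis_def)
  with assms show False
    by simp
qed

lemma br5_component_3: "br5 a b c d X Y $ 3 = 0"
  by (simp add: br5_def vector_def)

lemma nabla1_br5: "nabla1 (br5 a b c d) X Y = (X $ 3) *\<^sub>R br5 a b c d (ebas 3) Y"
  unfolding nabla1_def nabla0_def nablaJ_def LC_def Jps_def br5_def gmet_def ebas_def eps_def
  by (simp add: vec_eq_iff forall_3 vector_def axis_def field_simps)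

lemma curv_nabla1_br5: "curv (br5 a b c d) (nabla1 (br5 a b c d)) X Y Z = 0"
  unfolding curv_def nabla1_br5 br5_component_3
  by (simp add: bilinear_rmul[OF bilinear_br5])

theorem theorem4p11:
  fixes alpha beta gamma delta lambda0 c :: real
  assumes "alpha + delta \<noteq> 0" and "alpha * gamma + beta * delta = 0"
  shows "alg_schouten_soliton (br5 alpha beta gamma delta) (nabla1 (br5 alpha beta gamma delta)) lambda0 c
         \<longleftrightarrow> c = 0"
  unfolding alg_schouten_soliton_flat_iff[OF curv_nabla1_br5]
    scaleR_id_is_derivation_iff[OF bilinear_br5]
  using br5_nonabelian[where b = beta and c = gamma, OF assms(1)] by auto

end
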